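(* Let $(E,d_E)$ be a complete metric space and let $(A_n)_{n\ge 1}$ be a sequence of compact fuzzy sets in $E$. 1. Suppose that for every $\alpha\in(0,1]$ and every $n$ we have $A_{n+1}^\alpha\subseteq A_n^\alpha$. Then there is a compact fuzzy set $A$ in $E$ with $A^\alpha=\bigcap_{n\ge1}A_n^\alpha$ for every $\alpha\in(0,1]$, and $A_n\to A$ levelwise. 2. Under the hypothesis of item 1, for every $x\in E$ we have $A_n(x)\to A(x)$, where $A$ is the compact fuzzy set of item 1. 3. If for every $x\in E$ the sequence $(A_n(x))_{n\ge1}$ is non-increasing and converges to $A(x)$, where $A$ is a compact fuzzy set in $E$, then $A_n\to A$ levelwise.
   Context: A (normalized) fuzzy set in a set $\Omega$ is a function $A:\Omega\to[0,1]$ such that $A(x_0)=1$ for some $x_0\in\Omega$. For $\alpha\in(0,1]$ its $\alpha$-cut is $A^\alpha=\{x\in\Omega: A(x)\ge\alpha\}$. A compact fuzzy set in a topological space $E$ is a fuzzy set in $E$ all of whose $\alpha$-cuts, $\alpha\in(0,1]$, are nonempty and compact. $\mathcal K(E)$ denotes the set of nonempty compact subsets of a metric space $(E,d_E)$ with the Hausdorff metric $d_{\mathcal K(E)}(K,L)=\max\big(\sup_{x\in K}\inf_{y\in L}d_E(x,y),\ \sup_{x\in L}\inf_{y\in K}d_E(x,y)\big)$. A sequence $(A_n)$ of compact fuzzy sets converges levelwise to a compact fuzzy set $A$ if for every $\alpha\in(0,1]$, $A_n^\alpha\to A^\alpha$ in $(\mathcal K(E),d_{\mathcal K(E)})$.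 *)

theory Defs
  imports "HOL-Analysis.Analysis"
begin

definition fuzzy_set :: "('a \<Rightarrow> real) \<Rightarrow> bool" where
  "fuzzy_set A \<longleftrightarrow> (\<forall>x. 0 \<le> A x \<and> A x \<le> 1) \<and> (\<exists>x0. A x0 = 1)"

definition alpha_cut :: "('a \<Rightarrow> real) \<Rightarrow> real \<Rightarrow> 'a set" where
  "alpha_cut A \<alpha> = {x. A x \<ge> \<alpha>}"

definition compact_fuzzy_set :: "('a::topological_space \<Rightarrow> real) \<Rightarrow> bool" where
  "compact_fuzzy_set A \<longleftrightarrow> fuzzy_set A \<and>
     (\<forall>\<alpha>\<in>{0<..1}. alpha_cut A \<alpha> \<noteq> {} \<and> compact (alpha_cut A \<alpha>))"

definition hausdorff_dist :: "'a::metric_space set \<Rightarrow> 'a set \<Rightarrow> real" where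
  "hausdorff_dist K L =
     max (SUP x\<in>K. INF y\<in>L. dist x y) (SUP x\<in>L. INF y\<in>K. dist x y)"

definition levelwise_conv :: "(nat \<Rightarrow> 'a::metric_space \<Rightarrow> real) \<Rightarrow> ('a \<Rightarrow> real) \<Rightarrow> bool" where
  "levelwise_conv An A \<longleftrightarrow>
     (\<forall>\<alpha>\<in>{0<..1}. (\<lambda>n. hausdorff_dist (alpha_cut (An n) \<alpha>) (alpha_cut A \<alpha>)) \<longlonglongrightarrow> 0)"

end

theory Submission
  imports Defs
begin

text \<open>
  Everything rests on two facts about a decreasing sequence of nonempty
  compact sets \<open>K n\<close> in a metric space: its intersection \<open>L\<close> is nonempty and compact
  (Cantor), and \<open>K n \<rightarrow> L\<close> in the Hausdorff metric, because any open neighbourhood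
  of \<open>L\<close> eventually contains \<open>K n\<close>.

  For fuzzy sets with values in [0,1], inclusion of all \<alpha>-cuts (\<alpha> \<in> (0,1]) is
  the same as the pointwise order; hence such a fuzzy set is determined by its cuts,
  and the cuts of a sequence decrease iff the sequence decreases pointwise.  For a
  pointwise decreasing sequence of compact fuzzy sets the pointwise infimum has as
  \<alpha>-cuts the intersections of the \<alpha>-cuts of the sequence; so it is a compact fuzzy set,
  it is the levelwise limit, it is the pointwise limit, and it is the only compact
  fuzzy set with these cuts.  All three items of the theorem follow by identifying
  the relevant fuzzy set with this infimum.
\<close>

lemma decreasing_compact_eventually_subset:
  fixes K :: "nat \<Rightarrow> 'a::t2_space set"
  assumes compact: "\<And>n. compact (K n)" and decreasing: "\<And>n. K (Suc n) \<subseteq> K n"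
    and "open U" and Inter_sub: "(\<Inter>n. K n) \<subseteq> U"
  shows "\<exists>N. \<forall>n\<ge>N. K n \<subseteq> U"
proof -
  have antimono: "K n \<subseteq> K m" if "m \<le> n" for m n
    using lift_Suc_antimono_le[of K, OF decreasing that] .
  have "closed (K i - U)" for i
    using compact compact_imp_closed \<open>open U\<close> by blast
  moreover have "K 0 \<inter> (\<Inter>i\<in>UNIV. K i - U) = {}"
    using Inter_sub by blast
  ultimately obtain I where "finite I" and I_empty: "K 0 \<inter> (\<Inter>i\<in>I. K i - U) = {}"
    using compact_imp_fip_image[OF compact[of 0], of UNIV "\<lambda>i. K i - U"] by blast
  define N where "N = Max (insert 0 I)"
  have "K n \<subseteq> U" if "N \<le> n" for n
  proof -
    have "i \<le> n" if "i \<in> insert 0 I" for i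
      using that \<open>finite I\<close> \<open>N \<le> n\<close> unfolding N_def by (meson Max_ge finite_insert order_trans)
    then have "K n - U \<subseteq> K 0 \<inter> (\<Inter>i\<in>I. K i - U)"
      using antimono by blast
    then show ?thesis using I_empty by blast
  qed
  then show ?thesis by blast
qed

lemma decreasing_compact_Inter:
  fixes K :: "nat \<Rightarrow> 'a::t2_space set"
  assumes compact: "\<And>n. compact (K n)" and nonempty: "\<And>n. K n \<noteq> {}"
    and decreasing: "\<And>n. K (Suc n) \<subseteq> K n"
  shows "(\<Inter>n. K n) \<noteq> {}" and "compact (\<Inter>n. K n)"
proof -
  show "(\<Inter>n. K n) \<noteq> {}"
    using decreasing_compact_eventually_subset[of K "{}", OF compact decreasing] nonempty by auto
  have "(\<Inter>n. K n) = K 0 \<inter> (\<Inter>n. K n)" by blast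
  moreover have "closed (\<Inter>n. K n)" using compact compact_imp_closed by blast
  ultimately show "compact (\<Inter>n. K n)" using compact_Int_closed[OF compact[of 0]] by metis
qed

lemma hausdorff_dist_subset:
  assumes "L \<subseteq> K" and "L \<noteq> {}"
  shows "hausdorff_dist K L = max (SUP x\<in>K. infdist x L) 0"
proof -
  have "K \<noteq> {}" using assms by blast
  then have "(INF y\<in>K. dist x y) = infdist x K" for x
    by (simp add: infdist_notempty)
  then have "(INF y\<in>K. dist x y) = 0" if "x \<in> L" for x
    using that assms by auto
  then have "(SUP x\<in>L. INF y\<in>K. dist x y) = 0"
    using \<open>L \<noteq> {}\<close> by simp
  then show ?thesis
    unfolding hausdorff_dist_def using \<open>L \<noteq> {}\<close> by (simp add: infdist_notempty)
qed

lemma hausdorff_dist_decreasing_compact: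
  fixes K :: "nat \<Rightarrow> 'a::metric_space set"
  assumes compact: "\<And>n. compact (K n)" and nonempty: "\<And>n. K n \<noteq> {}"
    and decreasing: "\<And>n. K (Suc n) \<subseteq> K n"
  shows "(\<lambda>n. hausdorff_dist (K n) (\<Inter>n. K n)) \<longlonglongrightarrow> 0"
proof (rule LIMSEQ_I)
  fix e :: real assume "0 < e"
  define L where "L = (\<Inter>n. K n)"
  have "L \<noteq> {}"
    unfolding L_def by (rule decreasing_compact_Inter[of K, OF compact nonempty decreasing])
  define U where "U = {x. infdist x L < e/2}"
  have "open U" unfolding U_def
    by (rule open_Collect_less) (auto intro: continuous_intros)
  moreover have "L \<subseteq> U" using \<open>0 < e\<close> by (auto simp: U_def)
  ultimately obtain N where N: "\<And>n. N \<le> n \<Longrightarrow> K n \<subseteq> U"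
    using decreasing_compact_eventually_subset[of K U, OF compact decreasing] unfolding L_def by blast
  have "norm (hausdorff_dist (K n) L - 0) < e" if "N \<le> n" for n
  proof -
    have "(SUP x\<in>K n. infdist x L) \<le> e/2"
      using N[OF that] nonempty by (intro cSUP_least) (auto simp: U_def)
    moreover have "L \<subseteq> K n" unfolding L_def by blast
    ultimately show ?thesis
      using hausdorff_dist_subset[of L "K n"] \<open>L \<noteq> {}\<close> \<open>0 < e\<close> by auto
  qed
  then show "\<exists>N. \<forall>n\<ge>N. norm (hausdorff_dist (K n) (\<Inter>n. K n) - 0) < e"
    unfolding L_def by blast
qed

lemma compact_fuzzy_set_values:
  assumes "compact_fuzzy_set A"
  shows "0 \<le> A x" and "A x \<le> 1"
  using assms unfolding compact_fuzzy_set_def fuzzy_set_def by auto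

lemma alpha_cuts_subset_iff:
  assumes "\<And>x. 0 \<le> A x" and "\<And>x. B x \<le> 1"
  shows "(\<forall>\<alpha>\<in>{0<..1}. alpha_cut B \<alpha> \<subseteq> alpha_cut A \<alpha>) \<longleftrightarrow> (\<forall>x. B x \<le> A x)"
proof
  assume cuts: "\<forall>\<alpha>\<in>{0<..1}. alpha_cut B \<alpha> \<subseteq> alpha_cut A \<alpha>"
  show "\<forall>x. B x \<le> A x"
  proof
    fix x
    show "B x \<le> A x"
    proof (cases "B x \<le> 0")
      case True then show ?thesis using assms(1)[of x] by linarith
    next
      case False
      then have "B x \<in> {0<..1}" using assms(2)[of x] by auto
      then have "x \<in> alpha_cut A (B x)" using cuts by (auto simp: alpha_cut_def)
      then show ?thesis by (simp add: alpha_cut_def)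
    qed
  qed
qed (auto simp: alpha_cut_def intro: order_trans)

lemma alpha_cuts_eq_imp_eq:
  assumes "\<And>x. 0 \<le> A x" "\<And>x. A x \<le> 1" "\<And>x. 0 \<le> B x" "\<And>x. B x \<le> 1"
    and "\<forall>\<alpha>\<in>{0<..1}. alpha_cut A \<alpha> = alpha_cut B \<alpha>"
  shows "A = B"
  using alpha_cuts_subset_iff[of A B] alpha_cuts_subset_iff[of B A] assms
  by (auto intro!: antisym le_funI)

definition fuzzy_Inf :: "(nat \<Rightarrow> 'a \<Rightarrow> real) \<Rightarrow> 'a \<Rightarrow> real" where
  "fuzzy_Inf An = (\<lambda>x. INF n. An n x)"

lemma alpha_cut_fuzzy_Inf:
  assumes "\<And>n x. 0 \<le> An n x"
  shows "alpha_cut (fuzzy_Inf An) \<alpha> = (\<Inter>n. alpha_cut (An n) \<alpha>)"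
proof -
  have "bdd_below (range (\<lambda>n. An n x))" for x using assms by (intro bdd_belowI2[of _ 0]) auto
  then show ?thesis unfolding alpha_cut_def fuzzy_Inf_def by (auto simp: le_cINF_iff)
qed

locale decreasing_compact_fuzzy_seq =
  fixes An :: "nat \<Rightarrow> 'a::metric_space \<Rightarrow> real"
  assumes compact_fuzzy: "\<And>n. compact_fuzzy_set (An n)"
    and decreasing: "\<And>x. decseq (\<lambda>n. An n x)"
begin

lemma nonneg: "0 \<le> An n x" and le_one: "An n x \<le> 1"
  using compact_fuzzy_set_values[OF compact_fuzzy] by auto

lemma cut_compact: "\<alpha> \<in> {0<..1} \<Longrightarrow> compact (alpha_cut (An n) \<alpha>)"
  and cut_nonempty: "\<alpha> \<in> {0<..1} \<Longrightarrow> alpha_cut (An n) \<alpha> \<noteq> {}"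
  using compact_fuzzy[of n] unfolding compact_fuzzy_set_def by auto

lemma cut_decreasing: "alpha_cut (An (Suc n)) \<alpha> \<subseteq> alpha_cut (An n) \<alpha>"
  using decreasing by (auto simp: alpha_cut_def decseq_Suc_iff intro: order_trans)

lemma cut_Inf: "alpha_cut (fuzzy_Inf An) \<alpha> = (\<Inter>n. alpha_cut (An n) \<alpha>)"
  using alpha_cut_fuzzy_Inf[OF nonneg] .

lemma tendsto_Inf: "(\<lambda>n. An n x) \<longlonglongrightarrow> fuzzy_Inf An x"
  unfolding fuzzy_Inf_def
  by (rule LIMSEQ_decseq_INF[OF _ decreasing]) (intro bdd_belowI2[of _ 0] nonneg)

lemma Inf_values: "0 \<le> fuzzy_Inf An x" "fuzzy_Inf An x \<le> 1"
proof -
  show "0 \<le> fuzzy_Inf An x" by (rule LIMSEQ_le_const[OF tendsto_Inf]) (simp add: nonneg)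
  show "fuzzy_Inf An x \<le> 1" by (rule LIMSEQ_le_const2[OF tendsto_Inf]) (simp add: le_one)
qed

text \<open>The infimum is a compact fuzzy set: its cuts are nested intersections of
  nonempty compact sets.\<close>
lemma compact_fuzzy_Inf: "compact_fuzzy_set (fuzzy_Inf An)"
proof -
  have cuts: "alpha_cut (fuzzy_Inf An) \<alpha> \<noteq> {} \<and> compact (alpha_cut (fuzzy_Inf An) \<alpha>)"
    if "\<alpha> \<in> {0<..1}" for \<alpha>
    using decreasing_compact_Inter[of "\<lambda>n. alpha_cut (An n) \<alpha>",
        OF cut_compact[OF that] cut_nonempty[OF that] cut_decreasing]
    by (simp add: cut_Inf)
  then obtain x0 where "x0 \<in> alpha_cut (fuzzy_Inf An) 1" by fastforce
  then have "fuzzy_Inf An x0 = 1" using Inf_values[of x0] by (simp add: alpha_cut_def)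
  then show ?thesis
    unfolding compact_fuzzy_set_def fuzzy_set_def using Inf_values cuts by blast
qed

lemma levelwise_conv_Inf: "levelwise_conv An (fuzzy_Inf An)"
  unfolding levelwise_conv_def cut_Inf
  using hausdorff_dist_decreasing_compact[of "\<lambda>n. alpha_cut (An n) _",
      OF cut_compact cut_nonempty cut_decreasing] by blast

lemma Inf_unique:
  assumes "compact_fuzzy_set B" and "\<forall>\<alpha>\<in>{0<..1}. alpha_cut B \<alpha> = (\<Inter>n. alpha_cut (An n) \<alpha>)"
  shows "B = fuzzy_Inf An"
  using assms compact_fuzzy_set_values[OF assms(1)] Inf_values
  by (intro alpha_cuts_eq_imp_eq) (auto simp: cut_Inf)

end

lemma decreasing_cuts_imp_decreasing_compact_fuzzy_seq:
  assumes "\<And>n. compact_fuzzy_set (An n)"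
    and "\<forall>\<alpha>\<in>{0<..1}. \<forall>n. alpha_cut (An (Suc n)) \<alpha> \<subseteq> alpha_cut (An n) \<alpha>"
  shows "decreasing_compact_fuzzy_seq An"
proof
  show "decseq (\<lambda>n. An n x)" for x
    using assms alpha_cuts_subset_iff[of "An _" "An (Suc _)"] compact_fuzzy_set_values
    unfolding decseq_Suc_iff by blast
qed (fact assms(1))

theorem mainTheorem1:
  fixes An :: "nat \<Rightarrow> 'a::complete_space \<Rightarrow> real"
  assumes "\<And>n. compact_fuzzy_set (An n)"
  shows "((\<forall>\<alpha>\<in>{0<..1}. \<forall>n. alpha_cut (An (Suc n)) \<alpha> \<subseteq> alpha_cut (An n) \<alpha>) \<longrightarrow>
           ((\<exists>A. compact_fuzzy_set A \<and>
                 (\<forall>\<alpha>\<in>{0<..1}. alpha_cut A \<alpha> = (\<Inter>n. alpha_cut (An n) \<alpha>)) \<and>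
                 levelwise_conv An A) \<and>
            (\<forall>A. compact_fuzzy_set A \<and>
                 (\<forall>\<alpha>\<in>{0<..1}. alpha_cut A \<alpha> = (\<Inter>n. alpha_cut (An n) \<alpha>)) \<longrightarrow>
                 (\<forall>x. (\<lambda>n. An n x) \<longlonglongrightarrow> A x))))
         \<and> (\<forall>A. compact_fuzzy_set A \<and> (\<forall>x. decseq (\<lambda>n. An n x) \<and> (\<lambda>n. An n x) \<longlonglongrightarrow> A x)
               \<longrightarrow> levelwise_conv An A)"
proof (intro conjI impI allI)
  assume "\<forall>\<alpha>\<in>{0<..1}. \<forall>n. alpha_cut (An (Suc n)) \<alpha> \<subseteq> alpha_cut (An n) \<alpha>"
  then interpret decreasing_compact_fuzzy_seq An
    using decreasing_cuts_imp_decreasing_compact_fuzzy_seq assms by blast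
  show "\<exists>A. compact_fuzzy_set A \<and> (\<forall>\<alpha>\<in>{0<..1}. alpha_cut A \<alpha> = (\<Inter>n. alpha_cut (An n) \<alpha>))
          \<and> levelwise_conv An A"
    using compact_fuzzy_Inf cut_Inf levelwise_conv_Inf by blast
  show "(\<lambda>n. An n x) \<longlonglongrightarrow> A x"
    if "compact_fuzzy_set A \<and> (\<forall>\<alpha>\<in>{0<..1}. alpha_cut A \<alpha> = (\<Inter>n. alpha_cut (An n) \<alpha>))" for A x
    using Inf_unique that tendsto_Inf by blast
next
  fix A assume A: "compact_fuzzy_set A \<and> (\<forall>x. decseq (\<lambda>n. An n x) \<and> (\<lambda>n. An n x) \<longlonglongrightarrow> A x)"
  then interpret decreasing_compact_fuzzy_seq An
    using assms by unfold_locales blast+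
  have "A = fuzzy_Inf An"
    using A tendsto_Inf LIMSEQ_unique by blast
  then show "levelwise_conv An A" using levelwise_conv_Inf by simp
qed

end
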